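(* Let $G=(V,E)$ be a finite connected directed graph with $(i,j)\in E$ if and only if $(j,i)\in E$, and write $\partial i=\{j\in V:(j,i)\in E\}$. Let $f=(f_{ij})_{(i,j)\in E}$ with each $f_{ij}:\mathbb{R}\to\mathbb{R}$ continuous and strictly increasing and $f_{ij}(x)=-f_{ji}(-x)$. Let $(\phi,\pi)$ and $(\phi^*,\pi^* )$, with $\phi,\phi^*:E\to\mathbb{R}$ skew-symmetric and $\pi,\pi^*:V\to\mathbb{R}$, satisfy $\sum_{j\in\partial i}\phi_{ji}+q_i=0$, $\sum_{j\in\partial i}\phi^*_{ji}+q^*_i=0$ for all $i\in V$, and $\pi_j-\pi_i=-f_{ij}(\phi_{ij})$, $\pi^*_j-\pi^*_i=-f_{ij}(\phi^*_{ij})$ for all $(i,j)\in E$, for productions $q,q^*:V\to\mathbb{R}$. Let $T\subset V$. If $\pi_t=\pi_t^*$ for all $t\in T$ and $q_i\ge q_i^*$ for all $i\in V\setminus T$, then $q_t\le q_t^*$ for all $t\in T$. *)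

theory Defs
  imports "HOL-Analysis.Analysis"
begin

definition sym_graph :: "'v set \<Rightarrow> ('v \<times> 'v) set \<Rightarrow> bool" where
  "sym_graph V E \<longleftrightarrow> finite V \<and> E \<subseteq> V \<times> V \<and> (\<forall>i j. (i,j) \<in> E \<longleftrightarrow> (j,i) \<in> E)"

definition connected_graph :: "'v set \<Rightarrow> ('v \<times> 'v) set \<Rightarrow> bool" where
  "connected_graph V E \<longleftrightarrow> (\<forall>u\<in>V. \<forall>w\<in>V. (u,w) \<in> E\<^sup>*)"

definition nbhd :: "'v set \<Rightarrow> ('v \<times> 'v) set \<Rightarrow> 'v \<Rightarrow> 'v set" where
  "nbhd V E i = {j \<in> V. (j,i) \<in> E}"

definition is_solution ::
  "'v set \<Rightarrow> ('v \<times> 'v) set \<Rightarrow> ('v \<Rightarrow> 'v \<Rightarrow> real \<Rightarrow> real) \<Rightarrow> ('v \<Rightarrow> real)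
    \<Rightarrow> ('v \<Rightarrow> 'v \<Rightarrow> real) \<Rightarrow> ('v \<Rightarrow> real) \<Rightarrow> bool" where
  "is_solution V E f q \<phi> \<pi> \<longleftrightarrow>
     (\<forall>(i,j)\<in>E. \<phi> i j = - \<phi> j i) \<and>
     (\<forall>i\<in>V. (\<Sum>j\<in>nbhd V E i. \<phi> j i) + q i = 0) \<and>
     (\<forall>(i,j)\<in>E. \<pi> j - \<pi> i = - f i j (\<phi> i j))"

end

theory Submission
  imports Defs
begin

text \<open>
  Put \<open>d = \<pi> - \<pi>'\<close>. Since every \<open>f\<^sub>i\<^sub>j\<close> is strictly increasing, \<open>\<phi>\<^sub>i\<^sub>j \<le> \<phi>'\<^sub>i\<^sub>j\<close> exactly when
  \<open>d\<^sub>i \<le> d\<^sub>j\<close>, and \<open>q\<^sub>i - q'\<^sub>i\<close> is the total excess outflow \<open>\<Sum>\<^sub>j (\<phi>\<^sub>i\<^sub>j - \<phi>'\<^sub>i\<^sub>j)\<close>. Hence at a local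
  minimum of \<open>d\<close> we get \<open>q\<^sub>i \<le> q'\<^sub>i\<close>, with equality only if \<open>d\<close> is constant on the
  neighbourhood. This yields a minimum principle: if \<open>min d < 0\<close>, the minimum is attained
  outside \<open>T\<close>, where \<open>q\<^sub>i \<ge> q'\<^sub>i\<close>, so it spreads along edges and by connectivity reaches \<open>T\<close>,
  where \<open>d = 0\<close>. Thus \<open>d \<ge> 0\<close>, every \<open>t \<in> T\<close> is a minimum of \<open>d\<close>, and \<open>q\<^sub>t \<le> q'\<^sub>t\<close>.
\<close>

lemma nbhd_sym_graph_iff:
  assumes "sym_graph V E"
  shows "k \<in> nbhd V E i \<longleftrightarrow> (i, k) \<in> E"
  using assms unfolding sym_graph_def nbhd_def by auto

lemma connected_graph_edge_closed_subset:
  assumes "connected_graph V E" and "S \<subseteq> V" and "s \<in> S"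
    and closed: "\<And>i j. i \<in> S \<Longrightarrow> (i, j) \<in> E \<Longrightarrow> j \<in> S"
  shows "S = V"
proof
  show "V \<subseteq> S"
  proof
    fix v assume "v \<in> V"
    with assms(1-3) have "(s, v) \<in> E\<^sup>*" unfolding connected_graph_def by blast
    then show "v \<in> S" by (induction rule: rtrancl_induct) (use \<open>s \<in> S\<close> closed in auto)
  qed
qed (rule assms(2))

lemma solution_production_diff:
  assumes "is_solution V E f q \<phi> \<pi>" and "is_solution V E f q' \<phi>' \<pi>'" and "i \<in> V"
  shows "q i - q' i = (\<Sum>j\<in>nbhd V E i. \<phi> i j - \<phi>' i j)"
proof -
  have "q i - q' i = (\<Sum>j\<in>nbhd V E i. \<phi>' j i - \<phi> j i)"
    using assms unfolding is_solution_def by (auto simp: sum_subtractf algebra_simps)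
  also have "\<dots> = (\<Sum>j\<in>nbhd V E i. \<phi> i j - \<phi>' i j)"
    using assms(1,2) unfolding is_solution_def nbhd_def by (intro sum.cong) fastforce+
  finally show ?thesis .
qed

context
  fixes V :: "'v set" and E :: "('v \<times> 'v) set" and f :: "'v \<Rightarrow> 'v \<Rightarrow> real \<Rightarrow> real"
    and q q' :: "'v \<Rightarrow> real" and \<phi> \<phi>' :: "'v \<Rightarrow> 'v \<Rightarrow> real" and \<pi> \<pi>' :: "'v \<Rightarrow> real"
  assumes graph: "sym_graph V E"
    and f_strict_mono: "\<forall>(i,j)\<in>E. strict_mono (f i j)"
    and sol: "is_solution V E f q \<phi> \<pi>"
    and sol': "is_solution V E f q' \<phi>' \<pi>'"
begin

lemma solution_flow_le_iff:
  assumes "(i, j) \<in> E"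
  shows "\<phi> i j \<le> \<phi>' i j \<longleftrightarrow> \<pi> i - \<pi>' i \<le> \<pi> j - \<pi>' j"
proof -
  have "\<phi> i j \<le> \<phi>' i j \<longleftrightarrow> f i j (\<phi> i j) \<le> f i j (\<phi>' i j)"
    using f_strict_mono assms by (auto simp: strict_mono_less_eq)
  moreover have "f i j (\<phi> i j) = \<pi> i - \<pi> j" "f i j (\<phi>' i j) = \<pi>' i - \<pi>' j"
    using sol sol' assms unfolding is_solution_def by fastforce+
  ultimately show ?thesis by linarith
qed

lemma solution_flow_eq_iff:
  assumes "(i, j) \<in> E"
  shows "\<phi> i j = \<phi>' i j \<longleftrightarrow> \<pi> i - \<pi>' i = \<pi> j - \<pi>' j"
proof -
  have "\<phi> i j = \<phi>' i j \<longleftrightarrow> f i j (\<phi> i j) = f i j (\<phi>' i j)"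
    using f_strict_mono assms by (auto simp: strict_mono_eq)
  moreover have "f i j (\<phi> i j) = \<pi> i - \<pi> j" "f i j (\<phi>' i j) = \<pi>' i - \<pi>' j"
    using sol sol' assms unfolding is_solution_def by fastforce+
  ultimately show ?thesis by linarith
qed

lemma solution_production_le_at_local_min:
  assumes "i \<in> V" and local_min: "\<forall>k\<in>nbhd V E i. \<pi> i - \<pi>' i \<le> \<pi> k - \<pi>' k"
  shows "q i \<le> q' i"
proof -
  have "\<phi> i k - \<phi>' i k \<le> 0" if "k \<in> nbhd V E i" for k
  proof -
    have "(i, k) \<in> E" using that nbhd_sym_graph_iff[OF graph] by blast
    with that local_min show ?thesis using solution_flow_le_iff by simp
  qed
  then have "(\<Sum>k\<in>nbhd V E i. \<phi> i k - \<phi>' i k) \<le> 0"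
    by (rule sum_nonpos)
  then show ?thesis
    using solution_production_diff[OF sol sol' \<open>i \<in> V\<close>] by simp
qed

lemma solution_potential_diff_const_at_local_min:
  assumes "i \<in> V" and local_min: "\<forall>k\<in>nbhd V E i. \<pi> i - \<pi>' i \<le> \<pi> k - \<pi>' k"
    and "q' i \<le> q i" and "(i, j) \<in> E"
  shows "\<pi> j - \<pi>' j = \<pi> i - \<pi>' i"
proof -
  have fin: "finite (nbhd V E i)"
    using graph unfolding sym_graph_def nbhd_def by auto
  have nonneg: "\<phi>' i k - \<phi> i k \<ge> 0" if "k \<in> nbhd V E i" for k
  proof -
    have "(i, k) \<in> E" using that nbhd_sym_graph_iff[OF graph] by blast
    with that local_min show ?thesis using solution_flow_le_iff by simp
  qed
  have "(\<Sum>k\<in>nbhd V E i. \<phi>' i k - \<phi> i k) = q' i - q i"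
    using solution_production_diff[OF sol sol' \<open>i \<in> V\<close>] by (simp add: sum_subtractf)
  also have "\<dots> \<le> 0" using \<open>q' i \<le> q i\<close> by simp
  moreover have "(\<Sum>k\<in>nbhd V E i. \<phi>' i k - \<phi> i k) \<ge> 0"
    using nonneg by (rule sum_nonneg)
  ultimately have "(\<Sum>k\<in>nbhd V E i. \<phi>' i k - \<phi> i k) = 0"
    by linarith
  moreover have "j \<in> nbhd V E i"
    using \<open>(i, j) \<in> E\<close> nbhd_sym_graph_iff[OF graph] by blast
  ultimately have "\<phi>' i j - \<phi> i j = 0"
    using sum_nonneg_0[of "nbhd V E i" "\<lambda>k. \<phi>' i k - \<phi> i k"] fin nonneg by blast
  then show ?thesis using solution_flow_eq_iff[OF \<open>(i, j) \<in> E\<close>] by simp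
qed

lemma solution_potential_minimum_principle:
  assumes "connected_graph V E" and "T \<subseteq> V" and "t \<in> T"
    and agree: "\<forall>t\<in>T. \<pi> t = \<pi>' t" and dominate: "\<forall>i\<in>V - T. q' i \<le> q i"
    and "i \<in> V"
  shows "\<pi>' i \<le> \<pi> i"
proof (rule ccontr)
  define d where "d k = \<pi> k - \<pi>' k" for k
  define m where "m = Min (d ` V)"
  have "finite V" using graph unfolding sym_graph_def by simp
  then have m_le: "m \<le> d k" if "k \<in> V" for k using that m_def by simp
  assume "\<not> \<pi>' i \<le> \<pi> i"
  with m_le[OF \<open>i \<in> V\<close>] have "m < 0" unfolding d_def by simp
  define S where "S = {k \<in> V. d k = m}"
  have "m \<in> d ` V" using \<open>finite V\<close> \<open>i \<in> V\<close> m_def by (auto intro: Min_in)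
  then obtain s where "s \<in> S" unfolding S_def by auto
  have "S = V"
  proof (rule connected_graph_edge_closed_subset[OF assms(1) _ \<open>s \<in> S\<close>])
    fix k j assume "k \<in> S" and "(k, j) \<in> E"
    then have "k \<in> V - T" "j \<in> V"
      using agree \<open>m < 0\<close> graph unfolding S_def d_def sym_graph_def by auto
    moreover have "\<forall>l\<in>nbhd V E k. d k \<le> d l"
      using \<open>k \<in> S\<close> m_le unfolding S_def nbhd_def by auto
    ultimately show "j \<in> S"
      using solution_potential_diff_const_at_local_min[OF _ _ _ \<open>(k, j) \<in> E\<close>] dominate \<open>k \<in> S\<close>
      unfolding S_def d_def by auto
  qed (auto simp: S_def)
  then have "d t = m" using \<open>t \<in> T\<close> \<open>T \<subseteq> V\<close> unfolding S_def by auto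
  with \<open>m < 0\<close> agree \<open>t \<in> T\<close> show False unfolding d_def by simp
qed

end

theorem corollary2:
  fixes V :: "'v set" and E :: "('v \<times> 'v) set"
    and f :: "'v \<Rightarrow> 'v \<Rightarrow> real \<Rightarrow> real"
    and \<phi> \<phi>' :: "'v \<Rightarrow> 'v \<Rightarrow> real" and \<pi> \<pi>' q q' :: "'v \<Rightarrow> real"
    and T :: "'v set"
  assumes "sym_graph V E" and "connected_graph V E"
    and "\<forall>(i,j)\<in>E. continuous_on UNIV (f i j) \<and> strict_mono (f i j)"
    and "\<forall>(i,j)\<in>E. \<forall>x. f i j x = - f j i (- x)"
    and "is_solution V E f q \<phi> \<pi>"
    and "is_solution V E f q' \<phi>' \<pi>'"
    and "T \<subseteq> V"
    and "\<forall>t\<in>T. \<pi> t = \<pi>' t"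
    and "\<forall>i\<in>V - T. q i \<ge> q' i"
  shows "\<forall>t\<in>T. q t \<le> q' t"
proof
  fix t assume "t \<in> T"
  have f_strict_mono: "\<forall>(i,j)\<in>E. strict_mono (f i j)" using assms(3) by auto
  note potential_order = solution_potential_minimum_principle
    [OF assms(1) f_strict_mono assms(5,6,2,7) \<open>t \<in> T\<close> assms(8,9)]
  have "\<forall>k\<in>nbhd V E t. \<pi> t - \<pi>' t \<le> \<pi> k - \<pi>' k"
    using potential_order assms(8) \<open>t \<in> T\<close> unfolding nbhd_def by fastforce
  then show "q t \<le> q' t"
    using solution_production_le_at_local_min[OF assms(1) f_strict_mono assms(5,6)] \<open>t \<in> T\<close> assms(7) by blast
qed

end
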